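(* Let $q$ be an odd prime power, $\mathbb F_q$ the finite field of order $q$, $d$ a positive integer, and $A\subset \mathbb F_q^d$. Let $\mathcal{SQ}(A)$ be the number of pairs $(x,y)\in A\times A$ such that $\eta(\|x-y\|)=1$. \begin{enumerate} \item If $d\equiv 2\pmod 4$ and $q\equiv 3\pmod 4$, then $$\mathcal{SQ}(A)\le \frac{|A|^2}{2} + \frac{q^{\frac{d}{2}} |A|}{2} -\frac{|A|^2}{2q}- \frac{q^{\frac{d-2}{2}}|A|}{2}.$$ \item Let $d\equiv 0\pmod 4$, or $d\equiv 2\pmod 4$ and $q\equiv 1\pmod 4$. If $|A|\ge (q^{d/2}+q)/(1+q^{-(d-2)/2})$, then $$\mathcal{SQ}(A)\le \frac{|A|^2}{2} + \frac{q^{\frac{d}{2}} |A|}{2}-\frac{|A|^2}{q^{\frac{d}{2}}} -\frac{|A|^2}{2q}+ \frac{q^{\frac{d-2}{2}}|A|}{2}.$$ If $|A|\le (q^{d/2}+q)/(1+q^{-(d-2)/2})$, then $$\mathcal{SQ}(A) \le \frac{|A|^2}{2} + \frac{q^{\frac{d}{2}} |A|}{2} - \frac{|A|^2}{2 q^{\frac{d}{2}}} -\frac{|A|}{2}.$$ \end{enumerate}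
   Context: For $x,y\in\mathbb F_q^d$, $\|x-y\|:=(x_1-y_1)^2+\cdots+(x_d-y_d)^2\in\mathbb F_q$. $\eta$ denotes the quadratic character of $\mathbb F_q$ (so $\eta(a)=1$ if $a$ is a nonzero square, $\eta(a)=-1$ if $a$ is a non-square) with the convention $\eta(0)=0$. *)

theory Defs
  imports "HOL-Analysis.Analysis"
begin

definition qchar :: "'a::{finite,field} \<Rightarrow> int" where
  "qchar a = (if a = 0 then 0 else if (\<exists>b. b ^ 2 = a) then 1 else -1)"

definition fdist :: "'a::{finite,field} ^ 'n \<Rightarrow> 'a ^ 'n \<Rightarrow> 'a" where
  "fdist x y = (\<Sum>i\<in>UNIV. (x $ i - y $ i) ^ 2)"

definition SQ :: "('a::{finite,field} ^ 'n) set \<Rightarrow> nat" where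
  "SQ A = card {(x, y). x \<in> A \<and> y \<in> A \<and> qchar (fdist x y) = 1}"

end

(* Since 2 [eta t = 1] = eta t + 1 - [t = 0], the number 2 SQ(A) is the sum over pairs of A of a
   kernel built from eta (||v||) and the indicator of the isotropic cone ||v|| = 0.  Fix a
   nontrivial additive character psi of F_q.  Fourier analysis on F_q^d turns such a pair sum into
   q^-d sum_m k^(m) |sum_(x in A) psi (m . x)|^2, which by Parseval is at most (max_m k^(m)) |A|.
   Both transforms are explicit in terms of the Gauss sum G, with G^2 = eta (-1) q: the transform
   of eta (||v||) is G^d eta (-||m||), and that of the cone is q^(d-1) [m = 0] + G^d ([||m|| = 0] - 1/q).
   For even d, G^d = eta (-1)^(d/2) q^(d/2), whose sign is fixed by d and q mod 4; adding a
   suitable constant to the kernel balances its transform at m = 0 and gives the three bounds. *)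

theory Submission
  imports
    Defs
    "HOL-Computational_Algebra.Polynomial"
    "HOL-Library.Real_Mod"
begin

section \<open>The quadratic character of a finite field of odd order\<close>

lemma sum_UNIV_translate:
  fixes f :: "'a::{finite,ab_group_add} \<Rightarrow> 'b::comm_monoid_add"
  shows "(\<Sum>x\<in>UNIV. f (x + c)) = (\<Sum>x\<in>UNIV. f x)"
  by (rule sum.reindex_bij_witness[of _ "\<lambda>x. x - c" "\<lambda>x. x + c"]) auto

lemma sum_UNIV_dilate:
  fixes f :: "'a::{finite,field} \<Rightarrow> 'b::comm_monoid_add"
  assumes "c \<noteq> 0"
  shows "(\<Sum>x\<in>UNIV. f (c * x)) = (\<Sum>x\<in>UNIV. f x)"
  by (rule sum.reindex_bij_witness[of _ "\<lambda>x. x / c" "\<lambda>x. c * x"]) (use assms in auto)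

lemma sum_UNIV_inverse:
  fixes f :: "'a::{finite,field} \<Rightarrow> 'b::comm_monoid_add"
  shows "(\<Sum>x\<in>UNIV. f (inverse x)) = (\<Sum>x\<in>UNIV. f x)"
  by (rule sum.reindex_bij_witness[of _ inverse inverse]) auto

lemma of_nat_CARD_eq_0: "of_nat CARD('a) = (0::'a::{finite,ring_1})"
proof -
  have "(\<Sum>x\<in>UNIV. x + 1) = (\<Sum>x\<in>UNIV. x::'a)"
    by (rule sum_UNIV_translate)
  then show ?thesis by (simp add: sum.distrib)
qed

lemma two_neq_zero_if_odd_CARD:
  assumes "odd CARD('a::{finite,ring_1})"
  shows "(2::'a) \<noteq> 0"
proof
  assume two: "(2::'a) = 0"
  obtain k where "CARD('a) = Suc (2 * k)"
    using assms by (metis oddE Suc_eq_plus1)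
  then have "1 + 2 * of_nat k = (0::'a)"
    using of_nat_CARD_eq_0[where 'a='a] by simp
  with two show False by simp
qed

lemma four_neq_zero_if_odd_CARD:
  assumes "odd CARD('a::{finite,field})"
  shows "(4::'a) \<noteq> 0"
  using two_neq_zero_if_odd_CARD[OF assms] mult_eq_0_iff[of "2::'a" 2] by simp

lemma CARD_ge_3_if_odd:
  assumes "odd CARD('a::{finite,field})"
  shows "CARD('a) \<ge> 3"
proof -
  have "card {0::'a, 1} \<le> CARD('a)" by (rule card_mono) auto
  then have "CARD('a) \<ge> 2" by simp
  with assms show ?thesis by presburger
qed

lemma power_CARD_minus_one_eq_one:
  fixes x :: "'a::{finite,field}"
  assumes "x \<noteq> 0"
  shows "x ^ (CARD('a) - 1) = 1"
proof -
  let ?S = "UNIV - {0::'a}"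
  have "(\<Prod>y\<in>?S. x * y) = (\<Prod>y\<in>?S. y)"
    by (rule prod.reindex_bij_witness[of _ "\<lambda>y. y / x" "\<lambda>y. x * y"]) (use assms in auto)
  moreover have "(\<Prod>y\<in>?S. x * y) = x ^ card ?S * (\<Prod>y\<in>?S. y)"
    by (simp add: prod.distrib)
  moreover have "card ?S = CARD('a) - 1" by (simp add: card_Diff_subset)
  moreover have "(\<Prod>y\<in>?S. y) \<noteq> 0" by simp
  ultimately show ?thesis by simp
qed

lemma qchar_range: "qchar a \<in> {-1, 0, 1}"
  unfolding qchar_def by auto

lemma qchar_0 [simp]: "qchar 0 = 0"
  unfolding qchar_def by simp

lemma qchar_square [simp]: "x \<noteq> 0 \<Longrightarrow> qchar (x ^ 2) = 1"
  unfolding qchar_def by auto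

lemma qchar_1 [simp]: "qchar 1 = 1"
  using qchar_square[of 1] by simp

lemma qchar_power_even: "a \<noteq> 0 \<Longrightarrow> even n \<Longrightarrow> qchar a ^ n = 1"
  unfolding qchar_def by (auto elim: evenE)

lemma qchar_eq_0_iff [simp]: "qchar a = 0 \<longleftrightarrow> a = 0"
  unfolding qchar_def by simp

lemma card_square_roots_of_square:
  fixes b :: "'a::{finite,field}"
  assumes "odd CARD('a)" "b \<noteq> 0"
  shows "card {t. t ^ 2 = b ^ 2} = 2"
proof -
  have "b \<noteq> - b"
    using assms two_neq_zero_if_odd_CARD[OF assms(1)] by (metis add_eq_0_iff2 mult_2 mult_eq_0_iff)
  moreover have "{t. t ^ 2 = b ^ 2} = {b, - b}"
    by (auto simp: power2_eq_iff)
  ultimately show ?thesis by simp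
qed

lemma card_square_roots:
  fixes u :: "'a::{finite,field}"
  assumes "odd CARD('a)"
  shows "int (card {t. t ^ 2 = u}) = 1 + qchar u"
proof (cases "\<exists>b. b ^ 2 = u")
  case True
  then obtain b where b: "u = b ^ 2" by auto
  show ?thesis
  proof (cases "b = 0")
    case False
    then show ?thesis using b card_square_roots_of_square[OF assms False] by simp
  qed (use b in simp)
next
  case False
  then have "{t. t ^ 2 = u} = {}" by auto
  moreover have "u \<noteq> 0" using False by (metis zero_power2)
  ultimately show ?thesis using False by (simp add: qchar_def)
qed

lemma sum_UNIV_square:
  fixes f :: "'a::{finite,field} \<Rightarrow> 'b::comm_ring_1"
  assumes "odd CARD('a)"
  shows "(\<Sum>t\<in>UNIV. f (t ^ 2)) = (\<Sum>u\<in>UNIV. (1 + of_int (qchar u)) * f u)"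
proof -
  have card: "(of_nat (card {t. t ^ 2 = u}) :: 'b) = 1 + of_int (qchar u)" for u :: 'a
  proof -
    have "(of_nat (card {t. t ^ 2 = u}) :: 'b) = of_int (int (card {t. t ^ 2 = u}))"
      by simp
    also have "\<dots> = of_int (1 + qchar u)"
      by (simp only: card_square_roots[OF assms])
    finally show ?thesis by simp
  qed
  have "(\<Sum>t\<in>UNIV. f (t ^ 2)) = (\<Sum>u\<in>UNIV. \<Sum>t\<in>{t. t \<in> UNIV \<and> t ^ 2 = u}. f (t ^ 2))"
    by (rule sum.group[symmetric]) auto
  also have "\<dots> = (\<Sum>u\<in>UNIV. of_nat (card {t. t ^ 2 = u}) * f u)"
    by simp
  also have "\<dots> = (\<Sum>u\<in>UNIV. (1 + of_int (qchar u)) * f u)"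
    by (simp only: card)
  finally show ?thesis .
qed

lemma sum_qchar_eq_0:
  assumes "odd CARD('a::{finite,field})"
  shows "(\<Sum>x\<in>UNIV. qchar (x::'a)) = 0"
  using sum_UNIV_square[OF assms, of "\<lambda>_. 1::int"] by (simp add: sum.distrib)

lemma card_nonzero_squares:
  assumes "odd CARD('a::{finite,field})"
  shows "2 * card {u::'a. u \<noteq> 0 \<and> (\<exists>b. b ^ 2 = u)} = CARD('a) - 1"
proof -
  let ?S = "UNIV - {0::'a}"
  let ?T = "{u::'a. u \<noteq> 0 \<and> (\<exists>b. b ^ 2 = u)}"
  have "CARD('a) - 1 = (\<Sum>x\<in>?S. 1::nat)" by (simp add: card_Diff_subset)
  also have "\<dots> = (\<Sum>u\<in>?T. \<Sum>x | x \<in> ?S \<and> x ^ 2 = u. 1)"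
    by (rule sum.group[symmetric]) auto
  also have "\<dots> = (\<Sum>u\<in>?T. 2)"
  proof (rule sum.cong[OF refl])
    fix u assume "u \<in> ?T"
    then obtain b where b: "b \<noteq> 0" "u = b ^ 2" by auto
    then have "{x. x \<in> ?S \<and> x ^ 2 = u} = {t. t ^ 2 = b ^ 2}" by auto
    then show "(\<Sum>x | x \<in> ?S \<and> x ^ 2 = u. 1::nat) = 2"
      using card_square_roots_of_square[OF assms b(1)] by simp
  qed
  finally show ?thesis by simp
qed

text \<open>Euler's criterion. The nonzero squares are roots of \<open>X\<^sup>k - 1\<close>, \<open>k = (q - 1)/2\<close>, and there
  are exactly \<open>k\<close> of them, so they are all its roots.\<close>
lemma power_half_eq_one_iff_square:
  fixes a :: "'a::{finite,field}"
  assumes odd: "odd CARD('a)" and "a \<noteq> 0"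
  shows "a ^ ((CARD('a) - 1) div 2) = 1 \<longleftrightarrow> (\<exists>b. b ^ 2 = a)"
proof -
  let ?k = "(CARD('a) - 1) div 2"
  let ?T = "{u::'a. u \<noteq> 0 \<and> (\<exists>b. b ^ 2 = u)}"
  have two_k: "2 * ?k = CARD('a) - 1" using odd by presburger
  have k: "?k \<ge> 1" using CARD_ge_3_if_odd[OF odd] by linarith
  have square_root: "u ^ ?k = 1" if "u \<in> ?T" for u
  proof -
    from that obtain b where "b \<noteq> 0" "u = b ^ 2" by auto
    then show ?thesis
      using power_CARD_minus_one_eq_one[of b] two_k by (simp flip: power_mult)
  qed
  define p :: "'a poly" where "p = monom 1 ?k + [:-1:]"
  have "degree p = ?k"
    unfolding p_def using k by (simp add: degree_add_eq_left degree_monom_eq)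
  then have roots: "card {x. poly p x = 0} \<le> ?k"
    using card_poly_roots_bound[of p] k by force
  have sub: "?T \<subseteq> {x. poly p x = 0}"
    using square_root by (auto simp: p_def poly_monom)
  have "card ?T = ?k"
    using card_nonzero_squares[OF odd] two_k by simp
  then have "?T = {x. poly p x = 0}"
    using card_mono[OF finite sub] roots by (intro card_subset_eq[OF finite sub]) simp
  then show ?thesis
    using assms(2) by (auto simp: p_def poly_monom)
qed

lemma of_int_qchar_eq_power:
  fixes a :: "'a::{finite,field}"
  assumes odd: "odd CARD('a)"
  shows "of_int (qchar a) = a ^ ((CARD('a) - 1) div 2)"
proof (cases "a = 0")
  case True
  then show ?thesis using CARD_ge_3_if_odd[OF odd] by simp
next
  case False
  let ?k = "(CARD('a) - 1) div 2"
  have "2 * ?k = CARD('a) - 1" using odd by presburger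
  then have "(a ^ ?k) ^ 2 = 1"
    using power_CARD_minus_one_eq_one[OF False] by (simp flip: power_mult add: mult.commute)
  then have "a ^ ?k = 1 \<or> a ^ ?k = -1" by (simp add: power2_eq_1_iff)
  then show ?thesis
    using power_half_eq_one_iff_square[OF odd False] False by (auto simp: qchar_def)
qed

lemma of_int_sign_inject:
  assumes "odd CARD('a::{finite,field})" "i \<in> {-1, 0, 1}" "j \<in> {-1, 0, 1}"
    and "(of_int i :: 'a) = of_int j"
  shows "i = j"
proof -
  have "(-1::'a) \<noteq> 1"
    using two_neq_zero_if_odd_CARD[OF assms(1)] by (simp add: eq_neg_iff_add_eq_0 one_add_one)
  with assms(2-4) show ?thesis by auto
qed

lemma qchar_mult:
  fixes a b :: "'a::{finite,field}"
  assumes odd: "odd CARD('a)"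
  shows "qchar (a * b) = qchar a * qchar b"
proof (rule of_int_sign_inject[OF odd qchar_range])
  show "qchar a * qchar b \<in> {-1, 0, 1}"
    using qchar_range[of a] qchar_range[of b] by auto
  show "(of_int (qchar (a * b)) :: 'a) = of_int (qchar a * qchar b)"
    by (simp add: of_int_qchar_eq_power[OF odd] power_mult_distrib)
qed

lemma qchar_inverse:
  fixes a :: "'a::{finite,field}"
  assumes odd: "odd CARD('a)"
  shows "qchar (inverse a) = qchar a"
proof (cases "a = 0")
  case False
  then have "qchar (inverse a) * qchar a = 1"
    using qchar_mult[OF odd, of "inverse a" a] by simp
  then show ?thesis using qchar_range[of a] by auto
qed simp

lemma qchar_minus_one:
  assumes odd: "odd CARD('a::{finite,field})"
  shows "qchar (-1::'a) = (if CARD('a) mod 4 = 1 then 1 else -1)"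
proof (rule of_int_sign_inject[OF odd qchar_range])
  have "even ((CARD('a) - 1) div 2) \<longleftrightarrow> CARD('a) mod 4 = 1" using odd by presburger
  then show "(of_int (qchar (-1::'a)) :: 'a) = of_int (if CARD('a) mod 4 = 1 then 1 else -1)"
    by (simp add: of_int_qchar_eq_power[OF odd])
qed simp

lemma qchar_divide_four:
  fixes x :: "'a::{finite,field}"
  assumes odd: "odd CARD('a)"
  shows "qchar (x / 4) = qchar x"
proof -
  have "(2::'a) \<noteq> 0" by (rule two_neq_zero_if_odd_CARD[OF odd])
  then have "qchar (inverse ((2::'a) ^ 2)) = 1"
    unfolding qchar_inverse[OF odd] by (rule qchar_square)
  moreover have "x / 4 = x * inverse ((2::'a) ^ 2)"
    by simp
  ultimately show ?thesis
    by (simp only: qchar_mult[OF odd] mult_1_right)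
qed

lemma qchar_minus_one_power_half:
  assumes odd: "odd CARD('a::{finite,field})" and "even d"
  shows "qchar (-1::'a) ^ (d div 2) = (if d mod 4 = 2 \<and> CARD('a) mod 4 = 3 then -1 else 1)"
proof (cases "d mod 4 = 0")
  case True
  then have "even (d div 2)" by presburger
  with True show ?thesis by (simp add: qchar_power_even)
next
  case False
  with \<open>even d\<close> have "d mod 4 = 2" "odd (d div 2)" by presburger+
  moreover have "CARD('a) mod 4 = 1 \<or> CARD('a) mod 4 = 3" using odd by presburger
  ultimately show ?thesis
    using qchar_minus_one[OF odd] by auto
qed

section \<open>A nontrivial additive character\<close>

definition nontrivial_add_character :: "('a::ring_1 \<Rightarrow> complex) \<Rightarrow> bool" where
  "nontrivial_add_character \<psi> \<longleftrightarrow>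
     (\<forall>x y. \<psi> (x + y) = \<psi> x * \<psi> y) \<and> (\<forall>x. norm (\<psi> x) = 1) \<and> (\<exists>c. \<psi> c \<noteq> 1)"

definition add_subgroup :: "'a::ab_group_add set \<Rightarrow> bool" where
  "add_subgroup H \<longleftrightarrow> 0 \<in> H \<and> (\<forall>x\<in>H. \<forall>y\<in>H. x + y \<in> H) \<and> (\<forall>x\<in>H. - x \<in> H)"

lemma add_subgroup_diff: "add_subgroup H \<Longrightarrow> x \<in> H \<Longrightarrow> y \<in> H \<Longrightarrow> x - y \<in> H"
  unfolding add_subgroup_def by (metis diff_conv_add_uminus)

lemma add_subgroup_of_int_mult:
  fixes x :: "'a::ring_1"
  assumes H: "add_subgroup H" and "x \<in> H"
  shows "of_int k * x \<in> H"
proof -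
  have of_nat_mult: "of_nat n * x \<in> H" for n
    by (induction n) (use H \<open>x \<in> H\<close> in \<open>auto simp: add_subgroup_def distrib_right\<close>)
  show ?thesis
  proof (cases "k \<ge> 0")
    case True
    then show ?thesis using of_nat_mult[of "nat k"] by simp
  next
    case False
    then have "of_int k * x = - (of_nat (nat (- k)) * x)" by simp
    then show ?thesis using of_nat_mult[of "nat (- k)"] H by (simp add: add_subgroup_def)
  qed
qed

lemma ex_maximal_proper_add_subgroup:
  obtains H :: "'a::{finite,ring_1} set"
  where "add_subgroup H" "H \<noteq> UNIV"
    and "\<And>K. add_subgroup K \<Longrightarrow> H \<subseteq> K \<Longrightarrow> K \<noteq> UNIV \<Longrightarrow> K = H"
proof -
  let ?P = "{K::'a set. add_subgroup K \<and> K \<noteq> UNIV}"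
  have "add_subgroup {0::'a}" by (simp add: add_subgroup_def)
  moreover have "{0::'a} \<noteq> UNIV" by (metis UNIV_I singletonD zero_neq_one)
  ultimately have "?P \<noteq> {}" by blast
  moreover have "finite ?P" by simp
  ultimately obtain H where H: "H \<in> ?P" and maximal: "\<forall>K\<in>?P. H \<subseteq> K \<longrightarrow> H = K"
    using finite_has_maximal[of ?P] by blast
  show ?thesis
  proof (rule that)
    show "add_subgroup H" "H \<noteq> UNIV" using H by blast+
    show "K = H" if "add_subgroup K" "H \<subseteq> K" "K \<noteq> UNIV" for K
      using maximal that by blast
  qed
qed

lemma maximal_add_subgroup_span:
  fixes c :: "'a::ring_1"
  assumes H: "add_subgroup H" and c: "c \<notin> H"
    and maximal: "\<And>K. add_subgroup K \<Longrightarrow> H \<subseteq> K \<Longrightarrow> K \<noteq> UNIV \<Longrightarrow> K = H"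
  shows "\<exists>k. x - of_int k * c \<in> H"
proof -
  define K where "K = {of_int k * c + h | k h. h \<in> H}"
  have "add_subgroup K"
    unfolding add_subgroup_def
  proof (intro conjI ballI)
    show "0 \<in> K"
      unfolding K_def using H by (auto simp: add_subgroup_def intro!: exI[of _ 0])
  next
    fix x y assume "x \<in> K" "y \<in> K"
    then obtain k l g h where "x = of_int k * c + g" "g \<in> H" "y = of_int l * c + h" "h \<in> H"
      unfolding K_def by auto
    then show "x + y \<in> K"
      unfolding K_def using H
      by (intro CollectI exI[of _ "k + l"] exI[of _ "g + h"]) (auto simp: add_subgroup_def algebra_simps)
  next
    fix x assume "x \<in> K"
    then obtain k h where "x = of_int k * c + h" "h \<in> H"
      unfolding K_def by auto
    then show "- x \<in> K"
      unfolding K_def using H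
      by (intro CollectI exI[of _ "- k"] exI[of _ "- h"]) (auto simp: add_subgroup_def)
  qed
  moreover have "H \<subseteq> K"
    unfolding K_def by (force intro: exI[of _ 0])
  moreover have "c \<in> K"
    unfolding K_def using H by (force simp: add_subgroup_def intro: exI[of _ 1])
  ultimately have "K = UNIV"
    using maximal c by blast
  then obtain k h where "x = of_int k * c + h" "h \<in> H"
    unfolding K_def by blast
  then have "x - of_int k * c \<in> H" by simp
  then show ?thesis by blast
qed

lemma add_subgroup_period_dvd:
  fixes c :: "'a::ring_1"
  assumes H: "add_subgroup H" and "r > 0" and r: "of_nat r * c \<in> H"
    and least: "\<And>s. 0 < s \<Longrightarrow> s < r \<Longrightarrow> of_nat s * c \<notin> H"
    and k: "of_int k * c \<in> H"
  shows "int r dvd k"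
proof -
  have "of_int k = (of_int (k div int r * int r + k mod int r) :: 'a)"
    by simp
  also have "\<dots> = of_int (k div int r) * of_nat r + of_int (k mod int r)"
    by (simp only: of_int_add of_int_mult of_int_of_nat_eq)
  finally have "of_int (k mod int r) * c = of_int k * c - of_int (k div int r) * (of_nat r * c)"
    by (simp add: algebra_simps)
  also have "\<dots> \<in> H"
    by (rule add_subgroup_diff[OF H k add_subgroup_of_int_mult[OF H r]])
  finally have "of_nat (nat (k mod int r)) * c \<in> H"
    using \<open>r > 0\<close> by simp
  moreover have "nat (k mod int r) < r"
    using \<open>r > 0\<close> by (simp add: nat_less_iff)
  ultimately have "\<not> 0 < nat (k mod int r)"
    using least by blast
  moreover have "0 \<le> k mod int r"
    using \<open>r > 0\<close> by simp
  ultimately have "k mod int r = 0"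
    by linarith
  then show ?thesis by (simp add: dvd_eq_mod_eq_0)
qed

lemma add_character_of_cyclic_quotient:
  fixes c :: "'a::ring_1"
  assumes H: "add_subgroup H" and span: "\<And>x. \<exists>k. x - of_int k * c \<in> H"
    and r: "0 < r" "of_nat r * c \<in> H" and least: "\<And>s. 0 < s \<Longrightarrow> s < r \<Longrightarrow> of_nat s * c \<notin> H"
  shows "\<exists>\<psi> :: 'a \<Rightarrow> complex.
    (\<forall>x y. \<psi> (x + y) = \<psi> x * \<psi> y) \<and> (\<forall>x. norm (\<psi> x) = 1) \<and> \<psi> c = cis (2 * pi / r)"
proof -
  define \<psi> where "\<psi> x = cis (2 * pi * of_int (SOME k. x - of_int k * c \<in> H) / r)" for x
  have \<psi>_eq: "\<psi> x = cis (2 * pi * of_int k / r)" if "x - of_int k * c \<in> H" for x k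
  proof -
    define k0 where "k0 = (SOME k. x - of_int k * c \<in> H)"
    have k0: "x - of_int k0 * c \<in> H"
      unfolding k0_def using span by (rule someI_ex)
    have "(x - of_int k0 * c) - (x - of_int k * c) \<in> H"
      by (rule add_subgroup_diff[OF H k0 that])
    then have "of_int (k - k0) * c \<in> H" by (simp add: algebra_simps)
    then have "int r dvd k - k0"
      using add_subgroup_period_dvd[OF H r least] by blast
    then obtain m where "k - k0 = int r * m" ..
    then have "2 * pi * of_int k / r = 2 * pi * of_int k0 / r + 2 * pi * of_int m"
      using r(1) by (simp add: field_simps)
    then show ?thesis
      by (simp add: \<psi>_def k0_def[symmetric] cis_mult[symmetric])
  qed
  have "\<psi> (x + y) = \<psi> x * \<psi> y" for x y
  proof -
    obtain k l where k: "x - of_int k * c \<in> H" and l: "y - of_int l * c \<in> H"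
      using span by blast
    then have "(x - of_int k * c) + (y - of_int l * c) \<in> H"
      using H by (simp add: add_subgroup_def)
    then have "\<psi> (x + y) = cis (2 * pi * of_int (k + l) / r)"
      by (intro \<psi>_eq) (simp add: algebra_simps)
    also have "\<dots> = \<psi> x * \<psi> y"
      by (simp add: \<psi>_eq[OF k] \<psi>_eq[OF l] cis_mult add_divide_distrib distrib_left)
    finally show ?thesis .
  qed
  moreover have "norm (\<psi> x) = 1" for x
    by (simp add: \<psi>_def)
  moreover have "\<psi> c = cis (2 * pi / r)"
    using \<psi>_eq[of c 1] H by (simp add: add_subgroup_def)
  ultimately show ?thesis by blast
qed

lemma cis_2pi_div_neq_1:
  assumes "r \<ge> 2"
  shows "cis (2 * pi / real r) \<noteq> 1"
proof
  assume "cis (2 * pi / real r) = 1"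
  then obtain n :: int where n: "2 * pi / r = of_int n * (2 * pi)"
    by (auto simp: cis_eq_1_iff)
  have "1 / real r = (2 * pi / r) / (2 * pi)" by simp
  also have "\<dots> = of_int n" using n by simp
  finally have "1 / real r = of_int n" .
  moreover have "0 < 1 / real r" "1 / real r < 1" using assms by auto
  ultimately have "0 < n" "n < 1" by auto
  then show False by simp
qed

text \<open>For a maximal proper subgroup \<open>H\<close> and \<open>c \<notin> H\<close>, the quotient is cyclic of some order
  \<open>r \<ge> 2\<close> generated by \<open>c\<close>, and \<open>k c + H \<mapsto> e^(2\<pi>ik/r)\<close> is the character.\<close>
lemma ex_nontrivial_add_character: "\<exists>\<psi>::'a::{finite,ring_1} \<Rightarrow> complex. nontrivial_add_character \<psi>"
proof -
  obtain H :: "'a set" where H: "add_subgroup H" "H \<noteq> UNIV"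
    and maximal: "\<And>K. add_subgroup K \<Longrightarrow> H \<subseteq> K \<Longrightarrow> K \<noteq> UNIV \<Longrightarrow> K = H"
    using ex_maximal_proper_add_subgroup by blast
  obtain c where c: "c \<notin> H" using H(2) by blast
  have "\<exists>r::nat. 0 < r \<and> of_nat r * c \<in> H"
    using H(1) by (intro exI[of _ "CARD('a)"]) (simp add: of_nat_CARD_eq_0 add_subgroup_def)
  then obtain r :: nat where r: "0 < r" "of_nat r * c \<in> H"
    and least: "\<And>s. 0 < s \<Longrightarrow> s < r \<Longrightarrow> of_nat s * c \<notin> H"
    using LeastI_ex[where P = "\<lambda>r. 0 < r \<and> of_nat r * c \<in> H"]
      not_less_Least[where P = "\<lambda>r. 0 < r \<and> of_nat r * c \<in> H"]
    by blast
  have "r \<noteq> 1" using r c by auto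
  with r have "r \<ge> 2" by linarith
  note span = maximal_add_subgroup_span[OF H(1) c maximal]
  have "\<exists>\<psi> :: 'a \<Rightarrow> complex.
      (\<forall>x y. \<psi> (x + y) = \<psi> x * \<psi> y) \<and> (\<forall>x. norm (\<psi> x) = 1) \<and> \<psi> c = cis (2 * pi / r)"
    by (rule add_character_of_cyclic_quotient[OF H(1) span r least])
  then show ?thesis
    unfolding nontrivial_add_character_def using cis_2pi_div_neq_1[OF \<open>r \<ge> 2\<close>] by metis
qed

definition add_char :: "'a::{finite,ring_1} \<Rightarrow> complex" where
  "add_char = (SOME \<psi>. nontrivial_add_character \<psi>)"

lemma nontrivial_add_character_add_char: "nontrivial_add_character add_char"
  unfolding add_char_def by (rule someI_ex[OF ex_nontrivial_add_character])

lemma add_char_add: "add_char (x + y) = add_char x * add_char y"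
  using nontrivial_add_character_add_char unfolding nontrivial_add_character_def by blast

lemma norm_add_char [simp]: "norm (add_char x) = 1"
  using nontrivial_add_character_add_char unfolding nontrivial_add_character_def by blast

lemma add_char_neq_0 [simp]: "add_char x \<noteq> 0"
  using norm_add_char[of x] by (metis norm_zero zero_neq_one)

lemma add_char_0 [simp]: "add_char 0 = 1"
  using add_char_add[of 0 0] by simp

lemma add_char_uminus: "add_char (- x) = cnj (add_char x)"
proof -
  have "add_char (- x) * add_char x = 1"
    by (simp flip: add_char_add)
  moreover have "cnj (add_char x) * add_char x = 1"
    using complex_norm_square[of "add_char x"] by (simp add: mult.commute)
  ultimately show ?thesis
    by (metis add_char_neq_0 mult_cancel_right)
qed

lemma add_char_diff: "add_char (x - y) = add_char x * cnj (add_char y)"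
  using add_char_add[of x "- y"] by (simp add: add_char_uminus)

lemma add_char_sum: "add_char (\<Sum>i\<in>S. f i) = (\<Prod>i\<in>S. add_char (f i))"
  by (induction S rule: infinite_finite_induct) (auto simp: add_char_add)

lemma sum_add_char_eq_0: "(\<Sum>x\<in>UNIV. add_char (x::'a::{finite,ring_1})) = 0"
proof -
  obtain c :: 'a where c: "add_char c \<noteq> 1"
    using nontrivial_add_character_add_char unfolding nontrivial_add_character_def by blast
  have "(\<Sum>x\<in>UNIV. add_char (x::'a)) = (\<Sum>x\<in>UNIV. add_char (x + c))"
    using sum_UNIV_translate[of add_char c] by simp
  also have "\<dots> = add_char c * (\<Sum>x\<in>UNIV. add_char (x::'a))"
    by (simp add: add_char_add sum_distrib_left mult.commute)
  finally have "(1 - add_char c) * (\<Sum>x\<in>UNIV. add_char (x::'a)) = 0"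
    by (simp add: algebra_simps)
  then show ?thesis using c by simp
qed

lemma sum_add_char_mult:
  "(\<Sum>x\<in>UNIV. add_char (a * x)) = (if a = 0 then of_nat CARD('a) else (0::complex))"
  for a :: "'a::{finite,field}"
  using sum_UNIV_dilate[of a add_char] sum_add_char_eq_0 by auto

section \<open>Gauss sums\<close>

definition gauss_sum :: "'a::{finite,field} itself \<Rightarrow> complex" where
  "gauss_sum _ = (\<Sum>t\<in>UNIV. of_int (qchar (t::'a)) * add_char t)"

lemma sum_qchar_add_char_mult:
  fixes c :: "'a::{finite,field}"
  assumes odd: "odd CARD('a)"
  shows "(\<Sum>t\<in>UNIV. of_int (qchar t) * add_char (c * t)) = of_int (qchar c) * gauss_sum TYPE('a)"
proof (cases "c = 0")
  case True
  then show ?thesis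
    using arg_cong[OF sum_qchar_eq_0[OF odd], of "of_int :: int \<Rightarrow> complex"] by simp
next
  case False
  have "(\<Sum>t\<in>UNIV. of_int (qchar t) * add_char (c * t))
      = (\<Sum>t\<in>UNIV. of_int (qchar (inverse c * t)) * add_char (c * (inverse c * t)))"
    using sum_UNIV_dilate[of "inverse c" "\<lambda>t. of_int (qchar t) * add_char (c * t)"] False by simp
  also have "\<dots> = (\<Sum>t\<in>UNIV. of_int (qchar c) * (of_int (qchar t) * add_char (t::'a)))"
    using False by (simp add: qchar_mult[OF odd] qchar_inverse[OF odd] mult_ac)
  finally show ?thesis
    by (simp add: gauss_sum_def sum_distrib_left mult_ac)
qed

lemma sum_add_char_mult_square:
  fixes s :: "'a::{finite,field}"
  assumes odd: "odd CARD('a)" and "s \<noteq> 0"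
  shows "(\<Sum>t\<in>UNIV. add_char (s * t ^ 2)) = of_int (qchar s) * gauss_sum TYPE('a)"
proof -
  have "(\<Sum>t\<in>UNIV. add_char (s * t ^ 2)) = (\<Sum>u\<in>UNIV. (1 + of_int (qchar u)) * add_char (s * u))"
    using sum_UNIV_square[OF odd, of "\<lambda>u. add_char (s * u)"] by simp
  also have "\<dots> = (\<Sum>u\<in>UNIV. add_char (s * u)) + (\<Sum>u\<in>UNIV. of_int (qchar u) * add_char (s * u))"
    by (simp add: algebra_simps sum.distrib)
  also have "\<dots> = of_int (qchar s) * gauss_sum TYPE('a)"
    using assms by (simp add: sum_add_char_mult sum_qchar_add_char_mult)
  finally show ?thesis .
qed

lemma gauss_sum_square:
  assumes odd: "odd CARD('a::{finite,field})"
  shows "gauss_sum TYPE('a) ^ 2 = of_int (qchar (-1::'a)) * of_nat CARD('a)"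
proof -
  let ?G = "gauss_sum TYPE('a)"
  have "?G ^ 2 = (\<Sum>b\<in>UNIV. of_int (qchar b) * add_char (b::'a)) * ?G"
    by (simp add: power2_eq_square gauss_sum_def)
  also have "\<dots> = (\<Sum>b\<in>UNIV. of_int (qchar b) * add_char (b::'a) * ?G)"
    by (rule sum_distrib_right)
  also have "\<dots> = (\<Sum>b\<in>UNIV. add_char b * (\<Sum>t\<in>UNIV. of_int (qchar t) * add_char ((b::'a) * t)))"
    by (rule sum.cong[OF refl]) (simp add: sum_qchar_add_char_mult[OF odd] mult_ac)
  also have "\<dots> = (\<Sum>b\<in>UNIV. \<Sum>t\<in>UNIV. of_int (qchar t) * add_char ((1 + t) * (b::'a)))"
    by (rule sum.cong[OF refl]) (simp add: sum_distrib_left add_char_add ring_distribs mult_ac)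
  also have "\<dots> = (\<Sum>t\<in>UNIV. of_int (qchar t) * (\<Sum>b\<in>UNIV. add_char ((1 + t) * (b::'a))))"
    by (subst sum.swap) (simp add: sum_distrib_left)
  also have "\<dots> = (\<Sum>t\<in>UNIV. if t = (-1::'a) then of_int (qchar t) * of_nat CARD('a) else 0)"
    by (rule sum.cong) (auto simp: sum_add_char_mult add_eq_0_iff)
  finally show ?thesis by simp
qed

lemma gauss_sum_neq_0:
  assumes "odd CARD('a::{finite,field})"
  shows "gauss_sum TYPE('a) \<noteq> 0"
  using gauss_sum_square[OF assms] by (auto simp: power2_eq_square)

lemma sum_add_char_quadratic:
  fixes s b :: "'a::{finite,field}"
  assumes odd: "odd CARD('a)" and s: "s \<noteq> 0"
  shows "(\<Sum>t\<in>UNIV. add_char (s * t ^ 2 + b * t))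
    = add_char (- (b ^ 2 / (4 * s))) * of_int (qchar s) * gauss_sum TYPE('a)"
proof -
  have two: "(2::'a) \<noteq> 0" using two_neq_zero_if_odd_CARD[OF odd] .
  define c where "c = b / (2 * s)"
  have b: "b = 2 * s * c" unfolding c_def using s two by simp
  have "b ^ 2 / (4 * s) = s * c ^ 2"
    using s four_neq_zero_if_odd_CARD[OF odd] unfolding b by (simp add: power2_eq_square field_simps)
  then have square: "s * (t + - (b / (2 * s))) ^ 2 + b * (t + - (b / (2 * s)))
      = s * t ^ 2 + - (b ^ 2 / (4 * s))" for t
    unfolding c_def[symmetric] by (simp add: b power2_eq_square algebra_simps)
  have "(\<Sum>t\<in>UNIV. add_char (s * t ^ 2 + b * t))
      = (\<Sum>t\<in>UNIV. add_char (s * (t + - (b / (2 * s))) ^ 2 + b * (t + - (b / (2 * s)))))"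
    by (rule sum_UNIV_translate[symmetric])
  also have "\<dots> = (\<Sum>t\<in>UNIV. add_char (s * t ^ 2)) * add_char (- (b ^ 2 / (4 * s)))"
    by (simp only: square add_char_add sum_distrib_right)
  finally show ?thesis
    by (simp add: sum_add_char_mult_square[OF odd s] mult_ac)
qed

section \<open>Fourier analysis on \<open>'a ^ 'n\<close>\<close>

definition vdot :: "'a::comm_semiring_1 ^ 'n \<Rightarrow> 'a ^ 'n \<Rightarrow> 'a" where
  "vdot u v = (\<Sum>i\<in>UNIV. u $ i * v $ i)"

definition qform :: "'a::comm_semiring_1 ^ 'n \<Rightarrow> 'a" where
  "qform v = (\<Sum>i\<in>UNIV. (v $ i) ^ 2)"

definition fourier :: "('a::{finite,field} ^ 'n \<Rightarrow> complex) \<Rightarrow> 'a ^ 'n \<Rightarrow> complex" where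
  "fourier f m = (\<Sum>v\<in>UNIV. f v * add_char (vdot m v))"

lemma fdist_eq_qform: "fdist x y = qform (x - y)"
  unfolding fdist_def qform_def by simp

lemma qform_0 [simp]: "qform 0 = 0"
  unfolding qform_def by simp

lemma vdot_0_right [simp]: "vdot m 0 = 0"
  unfolding vdot_def by simp

lemma vdot_commute: "vdot u v = vdot v u"
  unfolding vdot_def by (simp add: mult.commute)

lemma vdot_diff_right: "vdot m (u - v) = vdot m u - vdot m (v :: 'a::comm_ring_1 ^ 'n)"
  unfolding vdot_def by (simp add: right_diff_distrib sum_subtractf)

lemma sum_UNIV_vec_prod:
  fixes h :: "'n::finite \<Rightarrow> 'a::finite \<Rightarrow> 'b::comm_semiring_1"
  shows "(\<Sum>v\<in>(UNIV :: ('a ^ 'n) set). \<Prod>i\<in>UNIV. h i (v $ i)) = (\<Prod>i\<in>UNIV. \<Sum>t\<in>UNIV. h i t)"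
proof -
  have "(\<Prod>i\<in>UNIV. \<Sum>t\<in>UNIV. h i t) = (\<Sum>g\<in>PiE UNIV (\<lambda>_. UNIV). \<Prod>i\<in>UNIV. h i (g i))"
    by (rule prod_sum_PiE) auto
  also have "PiE UNIV (\<lambda>_. UNIV) = (UNIV :: ('n \<Rightarrow> 'a) set)"
    by simp
  also have "(\<Sum>g\<in>UNIV. \<Prod>i\<in>UNIV. h i (g i)) = (\<Sum>v\<in>(UNIV :: ('a ^ 'n) set). \<Prod>i\<in>UNIV. h i (v $ i))"
    by (rule sum.reindex_bij_witness[where i = vec_nth and j = vec_lambda]) auto
  finally show ?thesis by simp
qed

lemma sum_add_char_vdot:
  fixes w :: "'a::{finite,field} ^ 'n"
  shows "(\<Sum>m\<in>UNIV. add_char (vdot m w)) = (if w = 0 then of_nat CARD('a) ^ CARD('n) else 0)"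
proof -
  have "(\<Sum>m\<in>UNIV. add_char (vdot m w)) = (\<Prod>i\<in>UNIV. \<Sum>t\<in>UNIV. add_char (w $ i * t))"
    using sum_UNIV_vec_prod[of "\<lambda>i t. add_char (t * w $ i)"]
    by (simp add: vdot_def add_char_sum mult.commute)
  also have "\<dots> = (\<Prod>i\<in>(UNIV :: 'n set). if w $ i = 0 then of_nat CARD('a) else 0)"
    by (simp add: sum_add_char_mult)
  also have "\<dots> = (if w = 0 then of_nat CARD('a) ^ CARD('n) else 0)"
  proof (cases "w = 0")
    case False
    then obtain i where "w $ i \<noteq> 0" by (auto simp: vec_eq_iff)
    then show ?thesis using False by (intro trans[OF prod_zero]) auto
  qed simp
  finally show ?thesis .
qed

lemma fourier_const:
  fixes m :: "'a::{finite,field} ^ 'n"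
  shows "fourier (\<lambda>_. c) m = c * (if m = 0 then of_nat CARD('a) ^ CARD('n) else 0)"
proof -
  have "(\<Sum>v\<in>UNIV. add_char (vdot m v)) = (if m = 0 then of_nat CARD('a) ^ CARD('n) else 0)"
    using sum_add_char_vdot[of m] by (simp add: vdot_commute)
  then show ?thesis
    unfolding fourier_def by (simp flip: sum_distrib_left)
qed

lemma fourier_add: "fourier (\<lambda>v. f v + g v) m = fourier f m + fourier g m"
  unfolding fourier_def by (simp add: distrib_right sum.distrib)

lemma fourier_diff: "fourier (\<lambda>v. f v - g v) m = fourier f m - fourier g m"
  unfolding fourier_def by (simp add: left_diff_distrib sum_subtractf)

lemma fourier_inversion:
  fixes f :: "'a::{finite,field} ^ 'n \<Rightarrow> complex"
  shows "of_nat CARD('a) ^ CARD('n) * f w = (\<Sum>m\<in>UNIV. fourier f m * cnj (add_char (vdot m w)))"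
proof -
  have "(\<Sum>m\<in>UNIV. fourier f m * cnj (add_char (vdot m w)))
      = (\<Sum>m\<in>UNIV. \<Sum>v\<in>UNIV. f v * add_char (vdot m (v - w)))"
    by (simp add: fourier_def sum_distrib_right vdot_diff_right add_char_diff mult.assoc)
  also have "\<dots> = (\<Sum>v\<in>UNIV. f v * (\<Sum>m\<in>UNIV. add_char (vdot m (v - w))))"
    by (subst sum.swap) (simp add: sum_distrib_left)
  also have "\<dots> = (\<Sum>v\<in>UNIV. if v = w then f v * of_nat CARD('a) ^ CARD('n) else 0)"
    by (rule sum.cong[OF refl]) (simp add: sum_add_char_vdot)
  finally show ?thesis by (simp add: mult.commute)
qed

lemma sum_pairs_fourier:
  fixes f :: "'a::{finite,field} ^ 'n \<Rightarrow> complex" and A :: "('a ^ 'n) set"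
  shows "of_nat CARD('a) ^ CARD('n) * (\<Sum>x\<in>A. \<Sum>y\<in>A. f (x - y))
    = (\<Sum>m\<in>UNIV. fourier f m * of_real ((cmod (\<Sum>x\<in>A. add_char (vdot m x))) ^ 2))"
proof -
  let ?e = "\<lambda>m x. add_char (vdot m x)"
  have "of_nat CARD('a) ^ CARD('n) * (\<Sum>x\<in>A. \<Sum>y\<in>A. f (x - y))
      = (\<Sum>x\<in>A. \<Sum>y\<in>A. \<Sum>m\<in>UNIV. fourier f m * (cnj (?e m x) * ?e m y))"
    unfolding sum_distrib_left
  proof (intro sum.cong refl)
    fix x y
    show "of_nat CARD('a) ^ CARD('n) * f (x - y)
        = (\<Sum>m\<in>UNIV. fourier f m * (cnj (?e m x) * ?e m y))"
      unfolding fourier_inversion[of f "x - y"] vdot_diff_right add_char_diff by simp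
  qed
  also have "\<dots> = (\<Sum>x\<in>A. \<Sum>m\<in>UNIV. \<Sum>y\<in>A. fourier f m * (cnj (?e m x) * ?e m y))"
    by (rule sum.cong[OF refl]) (rule sum.swap)
  also have "\<dots> = (\<Sum>m\<in>UNIV. \<Sum>x\<in>A. \<Sum>y\<in>A. fourier f m * (cnj (?e m x) * ?e m y))"
    by (rule sum.swap)
  also have "\<dots> = (\<Sum>m\<in>UNIV. fourier f m * (cnj (\<Sum>x\<in>A. ?e m x) * (\<Sum>y\<in>A. ?e m y)))"
  proof (rule sum.cong[OF refl])
    fix m
    have "cnj (\<Sum>x\<in>A. ?e m x) * (\<Sum>y\<in>A. ?e m y) = (\<Sum>x\<in>A. \<Sum>y\<in>A. cnj (?e m x) * ?e m y)"
      by (simp only: cnj_sum sum_product)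
    then show "(\<Sum>x\<in>A. \<Sum>y\<in>A. fourier f m * (cnj (?e m x) * ?e m y))
        = fourier f m * (cnj (\<Sum>x\<in>A. ?e m x) * (\<Sum>y\<in>A. ?e m y))"
      by (simp only: sum_distrib_left)
  qed
  also have "\<dots> = (\<Sum>m\<in>UNIV. fourier f m * of_real ((cmod (\<Sum>x\<in>A. ?e m x)) ^ 2))"
    by (simp only: complex_norm_square mult.commute[of "cnj _"])
  finally show ?thesis .
qed

lemma sum_norm_exp_sum_square:
  fixes A :: "('a::{finite,field} ^ 'n) set"
  shows "(\<Sum>m\<in>UNIV. (cmod (\<Sum>x\<in>A. add_char (vdot m x))) ^ 2) = real CARD('a) ^ CARD('n) * card A"
proof -
  define \<delta> :: "'a ^ 'n \<Rightarrow> complex" where "\<delta> v = (if v = 0 then 1 else 0)" for v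
  have "fourier \<delta> m = 1" for m
  proof -
    have "fourier \<delta> m = (\<Sum>v\<in>UNIV. if v = 0 then add_char (vdot m v) else 0)"
      unfolding fourier_def \<delta>_def by (rule sum.cong) auto
    then show ?thesis by simp
  qed
  moreover have "(\<Sum>x\<in>A. \<Sum>y\<in>A. \<delta> (x - y)) = of_nat (card A)"
    unfolding \<delta>_def by simp
  ultimately have "complex_of_real (real CARD('a) ^ CARD('n) * card A)
      = of_real (\<Sum>m\<in>UNIV. (cmod (\<Sum>x\<in>A. add_char (vdot m x))) ^ 2)"
    using sum_pairs_fourier[of \<delta> A] by simp
  then show ?thesis by (simp only: of_real_eq_iff)
qed

lemma sum_pairs_le_by_fourier:
  fixes k :: "'a::{finite,field} ^ 'n \<Rightarrow> real" and A :: "('a ^ 'n) set"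
  assumes fourier_k: "\<And>m. fourier (\<lambda>v. of_real (k v)) m = of_real (\<kappa> m)"
    and le: "\<And>m. \<kappa> m \<le> \<mu>"
  shows "(\<Sum>x\<in>A. \<Sum>y\<in>A. k (x - y)) \<le> \<mu> * card A"
proof -
  define S where "S m = (cmod (\<Sum>x\<in>A. add_char (vdot m x))) ^ 2" for m
  have "complex_of_real (real CARD('a) ^ CARD('n) * (\<Sum>x\<in>A. \<Sum>y\<in>A. k (x - y)))
      = of_nat CARD('a) ^ CARD('n) * (\<Sum>x\<in>A. \<Sum>y\<in>A. of_real (k (x - y)))"
    by simp
  also have "\<dots> = of_real (\<Sum>m\<in>UNIV. \<kappa> m * S m)"
    using sum_pairs_fourier[of "\<lambda>v. complex_of_real (k v)" A] by (simp add: fourier_k S_def)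
  finally have "real CARD('a) ^ CARD('n) * (\<Sum>x\<in>A. \<Sum>y\<in>A. k (x - y)) = (\<Sum>m\<in>UNIV. \<kappa> m * S m)"
    by (simp only: of_real_eq_iff)
  also have "\<dots> \<le> (\<Sum>m\<in>UNIV. \<mu> * S m)"
    by (intro sum_mono mult_right_mono le) (simp add: S_def)
  also have "\<dots> = real CARD('a) ^ CARD('n) * (\<mu> * card A)"
    by (simp add: S_def sum_norm_exp_sum_square flip: sum_distrib_left)
  finally show ?thesis by simp
qed

section \<open>Fourier transforms of the isotropic cone and of \<open>\<eta> \<circ> qform\<close>\<close>

lemma sum_add_char_quadratic_vec:
  fixes m :: "'a::{finite,field} ^ 'n"
  assumes odd: "odd CARD('a)" and s: "s \<noteq> 0"
  shows "(\<Sum>v\<in>UNIV. add_char (s * qform v + vdot m v))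
    = add_char (- (qform m / (4 * s))) * (of_int (qchar s) * gauss_sum TYPE('a)) ^ CARD('n)"
proof -
  have "add_char (s * qform v + vdot m v) = (\<Prod>i\<in>UNIV. add_char (s * (v $ i) ^ 2 + m $ i * v $ i))"
    for v :: "'a ^ 'n"
    by (simp add: qform_def vdot_def sum.distrib sum_distrib_left flip: add_char_sum)
  then have "(\<Sum>v\<in>UNIV. add_char (s * qform v + vdot m v))
      = (\<Sum>v\<in>UNIV. \<Prod>i\<in>UNIV. add_char (s * (v $ i) ^ 2 + m $ i * v $ i))"
    by simp
  also have "\<dots> = (\<Prod>i\<in>(UNIV :: 'n set). \<Sum>t\<in>UNIV. add_char (s * t ^ 2 + m $ i * t))"
    by (rule sum_UNIV_vec_prod)
  also have "\<dots> = (\<Prod>i\<in>(UNIV :: 'n set). add_char (- ((m $ i) ^ 2 / (4 * s))))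
      * (of_int (qchar s) * gauss_sum TYPE('a)) ^ CARD('n)"
    by (simp add: sum_add_char_quadratic[OF odd s] prod.distrib mult.assoc)
  also have "(\<Prod>i\<in>(UNIV :: 'n set). add_char (- ((m $ i) ^ 2 / (4 * s))))
      = add_char (- (qform m / (4 * s)))"
    by (simp add: qform_def sum_negf sum_divide_distrib flip: add_char_sum)
  finally show ?thesis .
qed

lemma sum_add_char_quadratic_vec_even:
  fixes m :: "'a::{finite,field} ^ 'n"
  assumes odd: "odd CARD('a)" and even: "even CARD('n)"
  shows "(\<Sum>v\<in>UNIV. add_char (s * qform v + vdot m v)) =
    (if s = 0 then (if m = 0 then of_nat CARD('a) ^ CARD('n) else 0)
     else gauss_sum TYPE('a) ^ CARD('n) * add_char (- (qform m / 4) * inverse s))"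
proof (cases "s = 0")
  case True
  then show ?thesis
    using sum_add_char_vdot[of m] by (simp add: vdot_commute)
next
  case False
  have "(of_int (qchar s) :: complex) ^ CARD('n) = 1"
    by (simp only: of_int_power[symmetric] qchar_power_even[OF False even] of_int_1)
  then have G: "(of_int (qchar s) * gauss_sum TYPE('a)) ^ CARD('n) = gauss_sum TYPE('a) ^ CARD('n)"
    by (simp add: power_mult_distrib)
  have c: "- (qform m / (4 * s)) = - (qform m / 4) * inverse s"
    by (simp only: divide_inverse minus_mult_left inverse_mult_distrib mult.assoc)
  show ?thesis
    unfolding sum_add_char_quadratic_vec[OF odd False] G c using False by (simp add: mult.commute)
qed

text \<open>Detecting \<open>qform v = 0\<close> by the orthogonality relation
  \<open>q [qform v = 0] = \<Sum>\<^sub>s \<psi>(s qform v)\<close> turns the transform into the quadratic sums above.\<close>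
lemma fourier_isotropic_indicator:
  fixes m :: "'a::{finite,field} ^ 'n"
  assumes odd: "odd CARD('a)" and even: "even CARD('n)"
  shows "of_nat CARD('a) * fourier (\<lambda>v. if qform v = 0 then 1 else 0) m
    = (if m = 0 then of_nat CARD('a) ^ CARD('n) else 0)
      + gauss_sum TYPE('a) ^ CARD('n) * ((if qform m = 0 then of_nat CARD('a) else 0) - 1)"
proof -
  let ?G = "gauss_sum TYPE('a) ^ CARD('n)"
  let ?c = "- (qform m / 4)"
  have indicator: "of_nat CARD('a) * (if qform v = 0 then 1 else 0) = (\<Sum>s\<in>UNIV. add_char (s * qform v))"
    for v :: "'a ^ 'n"
    using sum_add_char_mult[of "qform v"] by (simp add: mult.commute)
  have "of_nat CARD('a) * fourier (\<lambda>v. if qform v = 0 then 1 else 0) m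
      = (\<Sum>v\<in>UNIV. (of_nat CARD('a) * (if qform v = 0 then 1 else 0)) * add_char (vdot m v))"
    by (simp add: fourier_def sum_distrib_left mult.assoc)
  also have "\<dots> = (\<Sum>v\<in>UNIV. \<Sum>s\<in>UNIV. add_char (s * qform v + vdot m v))"
    unfolding indicator by (simp add: sum_distrib_right add_char_add)
  also have "\<dots> = (\<Sum>s\<in>UNIV. \<Sum>v\<in>UNIV. add_char (s * qform v + vdot m v))"
    by (rule sum.swap)
  also have "\<dots> = (\<Sum>s\<in>UNIV. if s = 0 then (if m = 0 then of_nat CARD('a) ^ CARD('n) else 0)
      else ?G * add_char (?c * inverse s))"
    by (simp only: sum_add_char_quadratic_vec_even[OF odd even])
  also have "\<dots> = (if m = 0 then of_nat CARD('a) ^ CARD('n) else 0)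
      + (\<Sum>s\<in>UNIV. ?G * add_char (?c * inverse s)) - ?G"
    by (simp add: sum.remove[of UNIV 0] algebra_simps)
  also have "(\<Sum>s\<in>UNIV. ?G * add_char (?c * inverse s)) = ?G * (\<Sum>s\<in>UNIV. add_char (?c * s))"
    using sum_UNIV_inverse[of "\<lambda>s. ?G * add_char (?c * s)"] by (simp add: sum_distrib_left)
  also have "(\<Sum>s\<in>UNIV. add_char (?c * s)) = (if qform m = 0 then of_nat CARD('a) else 0)"
    using four_neq_zero_if_odd_CARD[OF odd] by (simp only: sum_add_char_mult) simp
  finally show ?thesis by (simp add: algebra_simps)
qed

lemma fourier_qchar_qform:
  fixes m :: "'a::{finite,field} ^ 'n"
  assumes odd: "odd CARD('a)" and even: "even CARD('n)"
  shows "fourier (\<lambda>v. of_int (qchar (qform v))) m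
    = gauss_sum TYPE('a) ^ CARD('n) * of_int (qchar (- qform m))"
proof -
  let ?g = "gauss_sum TYPE('a)"
  let ?G = "gauss_sum TYPE('a) ^ CARD('n)"
  let ?c = "- (qform m / 4)"
  have twisted: "of_int (qchar a) * ?g = (\<Sum>s\<in>UNIV. of_int (qchar s) * add_char (s * a))" for a :: 'a
    using sum_qchar_add_char_mult[OF odd, of a] by (simp add: mult.commute)
  have "?g * fourier (\<lambda>v. of_int (qchar (qform v))) m
      = (\<Sum>v\<in>UNIV. (of_int (qchar (qform v)) * ?g) * add_char (vdot m v))"
    by (simp add: fourier_def sum_distrib_left mult_ac)
  also have "\<dots> = (\<Sum>v\<in>UNIV. \<Sum>s\<in>UNIV. of_int (qchar s) * add_char (s * qform v + vdot m v))"
    unfolding twisted by (simp add: sum_distrib_right add_char_add mult.assoc)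
  also have "\<dots> = (\<Sum>s\<in>UNIV. of_int (qchar s) * (\<Sum>v\<in>UNIV. add_char (s * qform v + vdot m v)))"
    by (subst sum.swap) (simp add: sum_distrib_left)
  also have "\<dots> = (\<Sum>s\<in>UNIV. ?G * (of_int (qchar (inverse s)) * add_char (?c * inverse s)))"
    by (rule sum.cong[OF refl])
      (simp add: sum_add_char_quadratic_vec_even[OF odd even] qchar_inverse[OF odd] mult_ac)
  also have "\<dots> = ?G * (\<Sum>s\<in>UNIV. of_int (qchar s) * add_char (?c * s))"
    using sum_UNIV_inverse[of "\<lambda>s. ?G * (of_int (qchar s) * add_char (?c * s))"]
    by (simp add: sum_distrib_left)
  also have "\<dots> = ?G * (of_int (qchar ?c) * ?g)"
    by (simp only: sum_qchar_add_char_mult[OF odd])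
  also have "qchar ?c = qchar (- qform m)"
    using qchar_divide_four[OF odd, of "- qform m"] by simp
  finally have "?g * fourier (\<lambda>v. of_int (qchar (qform v))) m = ?g * (?G * of_int (qchar (- qform m)))"
    by (simp add: mult_ac)
  then show ?thesis
    using gauss_sum_neq_0[OF odd] by simp
qed

section \<open>Counting pairs at square distance\<close>

lemma gauss_sum_power_even:
  assumes odd: "odd CARD('a::{finite,field})" and even: "even d"
  shows "gauss_sum TYPE('a) ^ d
    = of_real (real_of_int (qchar (-1::'a) ^ (d div 2)) * real CARD('a) ^ (d div 2))"
proof -
  have "gauss_sum TYPE('a) ^ d = (gauss_sum TYPE('a) ^ 2) ^ (d div 2)"
    using even by (simp flip: power_mult)
  also have "\<dots> = (of_int (qchar (-1::'a)) * of_nat CARD('a)) ^ (d div 2)"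
    by (simp only: gauss_sum_square[OF odd])
  finally show ?thesis by (simp add: power_mult_distrib)
qed

lemma SQ_eq_sum_pairs:
  fixes A :: "('a::{finite,field} ^ 'n) set"
  shows "real (SQ A) = (\<Sum>x\<in>A. \<Sum>y\<in>A. if qchar (qform (x - y)) = 1 then 1 else 0)"
proof -
  have "{(x, y). x \<in> A \<and> y \<in> A \<and> qchar (fdist x y) = 1} = {p \<in> A \<times> A. qchar (qform (fst p - snd p)) = 1}"
    by (auto simp: fdist_eq_qform)
  then have "real (SQ A) = (\<Sum>p\<in>A \<times> A. if qchar (qform (fst p - snd p)) = 1 then 1 else 0)"
    by (simp add: SQ_def sum.If_cases Int_def)
  also have "\<dots> = (\<Sum>x\<in>A. \<Sum>y\<in>A. if qchar (qform (x - y)) = 1 then 1 else 0)"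
    by (simp add: sum.cartesian_product split_def)
  finally show ?thesis .
qed

lemma sum_pairs_kernel_ge:
  fixes A :: "('a::{finite,field} ^ 'n) set"
  assumes "a \<le> 1"
  shows "2 * real (SQ A) - real (card A) ^ 2 + (1 - a) * real (card A) + c * real (card A) ^ 2
    \<le> (\<Sum>x\<in>A. \<Sum>y\<in>A. real_of_int (qchar (qform (x - y))) - a * (if qform (x - y) = 0 then 1 else 0) + c)"
proof -
  let ?z = "\<lambda>x y. if qform (x - y) = 0 then 1 else (0::real)"
  have "real (card A) = (\<Sum>x\<in>A. ?z x x)"
    by simp
  also have "\<dots> \<le> (\<Sum>x\<in>A. \<Sum>y\<in>A. ?z x y)"
    by (intro sum_mono member_le_sum) auto
  finally have diagonal: "(1 - a) * real (card A) \<le> (1 - a) * (\<Sum>x\<in>A. \<Sum>y\<in>A. ?z x y)"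
    using assms by (intro mult_left_mono) auto
  have "(\<Sum>x\<in>A. \<Sum>y\<in>A. real_of_int (qchar (qform (x - y))) - a * ?z x y + c)
      = (\<Sum>x\<in>A. \<Sum>y\<in>A. 2 * (if qchar (qform (x - y)) = 1 then 1 else 0) + (c - 1) + (1 - a) * ?z x y)"
    by (intro sum.cong refl) (auto simp: qchar_def algebra_simps)
  also have "\<dots> = 2 * real (SQ A) + (c - 1) * real (card A) ^ 2 + (1 - a) * (\<Sum>x\<in>A. \<Sum>y\<in>A. ?z x y)"
    by (simp add: SQ_eq_sum_pairs sum.distrib sum_distrib_left power2_eq_square)
  finally show ?thesis
    using diagonal by (simp add: algebra_simps)
qed

lemma fourier_kernel:
  fixes m :: "'a::{finite,field} ^ 'n"
  defines "q \<equiv> real CARD('a)"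
    and "g \<equiv> real_of_int (qchar (-1::'a) ^ (CARD('n) div 2)) * real CARD('a) ^ (CARD('n) div 2)"
  assumes odd: "odd CARD('a)" and even: "even CARD('n)"
  shows "fourier (\<lambda>v. of_real (real_of_int (qchar (qform v)) - a * (if qform v = 0 then 1 else 0) + c)) m
    = of_real (g * real_of_int (qchar (- qform m))
      - a * ((if m = 0 then q ^ CARD('n) else 0) + g * ((if qform m = 0 then q else 0) - 1)) / q
      + c * (if m = 0 then q ^ CARD('n) else 0))"
proof -
  have G: "gauss_sum TYPE('a) ^ CARD('n) = of_real g"
    unfolding g_def by (rule gauss_sum_power_even[OF odd even])
  have q: "of_real q = (of_nat CARD('a) :: complex)" "q \<noteq> 0"
    unfolding q_def by simp_all
  have indicator: "fourier (\<lambda>v. if qform v = 0 then 1 else 0) m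
      = of_real (((if m = 0 then q ^ CARD('n) else 0) + g * ((if qform m = 0 then q else 0) - 1)) / q)"
    using fourier_isotropic_indicator[OF odd even, of m] q
    by (simp add: G field_simps)
  have kernel: "(\<lambda>v. complex_of_real (real_of_int (qchar (qform v)) - a * (if qform v = 0 then 1 else 0) + c))
      = (\<lambda>v. (of_int (qchar (qform v)) - of_real a * (if qform v = 0 then 1 else 0)) + of_real c)"
    by auto
  have "fourier (\<lambda>v. of_real (real_of_int (qchar (qform v)) - a * (if qform v = 0 then 1 else 0) + c)) m
      = fourier (\<lambda>v. of_int (qchar (qform v))) m
        - of_real a * fourier (\<lambda>v. if qform v = 0 then 1 else 0) m + fourier (\<lambda>_. of_real c) m"
    unfolding kernel by (simp add: fourier_add fourier_diff fourier_def sum_distrib_left mult.assoc)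
  then show ?thesis
    by (simp add: fourier_qchar_qform[OF odd even] fourier_const indicator G q)
qed

text \<open>By \<open>2 [\<eta>(t) = 1] = \<eta>(t) + 1 - [t = 0]\<close>, the pair sum over \<open>A\<close> of the kernel
  \<open>\<eta>(qform v) - a [qform v = 0] + c\<close> is essentially \<open>2 SQ(A)\<close>. The three hypotheses bound
  its Fourier transform at \<open>m = 0\<close>, on the rest of the cone \<open>qform m = 0\<close>, and off the cone.\<close>
lemma SQ_le_by_kernel:
  fixes A :: "('a::{finite,field} ^ 'n) set"
  defines "q \<equiv> real CARD('a)" and "N \<equiv> real (card A)"
    and "g \<equiv> real_of_int (qchar (-1::'a) ^ (CARD('n) div 2)) * real CARD('a) ^ (CARD('n) div 2)"
  assumes odd: "odd CARD('a)" and even: "even CARD('n)" and "a \<le> 1"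
    and at_0: "c * q ^ CARD('n) - a * (q ^ CARD('n) + g * (q - 1)) / q \<le> \<mu>"
    and on_cone: "- a * g * (q - 1) / q \<le> \<mu>"
    and off_cone: "\<bar>g\<bar> + a * g / q \<le> \<mu>"
  shows "2 * real (SQ A) - N ^ 2 + (1 - a) * N + c * N ^ 2 \<le> \<mu> * N"
proof -
  define \<kappa> where "\<kappa> m = g * real_of_int (qchar (- qform m))
      - a * ((if m = 0 then q ^ CARD('n) else 0) + g * ((if qform m = 0 then q else 0) - 1)) / q
      + c * (if m = 0 then q ^ CARD('n) else 0)" for m :: "'a ^ 'n"
  define k where "k v = real_of_int (qchar (qform v)) - a * (if qform v = 0 then 1 else 0) + c"
    for v :: "'a ^ 'n"
  have "fourier (\<lambda>v. of_real (k v)) m = of_real (\<kappa> m)" for m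
    unfolding k_def \<kappa>_def q_def g_def by (rule fourier_kernel[OF odd even])
  moreover have "\<kappa> m \<le> \<mu>" for m
  proof (cases "qform m = 0")
    case True
    then show ?thesis
      using at_0 on_cone by (cases "m = 0") (simp_all add: \<kappa>_def)
  next
    case False
    then have "m \<noteq> 0" by auto
    moreover have "g * real_of_int (qchar (- qform m)) \<le> \<bar>g\<bar>"
      using qchar_range[of "- qform m"] by auto
    ultimately show ?thesis
      using False off_cone by (simp add: \<kappa>_def)
  qed
  ultimately have "(\<Sum>x\<in>A. \<Sum>y\<in>A. k (x - y)) \<le> \<mu> * real (card A)"
    by (rule sum_pairs_le_by_fourier)
  then show ?thesis
    using sum_pairs_kernel_ge[OF \<open>a \<le> 1\<close>, of A c] unfolding k_def N_def by linarith
qed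

lemma power_even_div_2:
  fixes x :: real
  assumes "even d" "d > 0"
  shows "x ^ d = (x ^ (d div 2)) ^ 2" "x ^ (d div 2) = x * x ^ ((d - 2) div 2)"
proof -
  obtain k where k: "d = 2 * k" "k > 0" using assms by (auto elim: evenE)
  then show "x ^ d = (x ^ (d div 2)) ^ 2" by (simp add: power_mult mult.commute)
  from k have "d div 2 = Suc ((d - 2) div 2)" by simp
  then show "x ^ (d div 2) = x * x ^ ((d - 2) div 2)" by simp
qed

lemma SQ_upper_bound_negative_sign:
  fixes A :: "('a::{finite,field} ^ 'n) set"
  defines "q \<equiv> real CARD('a)" and "d \<equiv> CARD('n)" and "N \<equiv> real (card A)"
  assumes odd: "odd CARD('a)" and even: "even d" and sign: "qchar (-1::'a) ^ (d div 2) = -1"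
  shows "real (SQ A) \<le> N^2/2 + q^(d div 2) * N / 2 - N^2/(2*q) - q^((d-2) div 2) * N / 2"
proof -
  define Q where "Q = q ^ (d div 2)"
  have q: "q > 0" and "Q > 0" unfolding Q_def q_def by simp_all
  have Q: "q ^ d = Q ^ 2" "Q = q * q ^ ((d - 2) div 2)"
    unfolding Q_def d_def using power_even_div_2[OF even[unfolded d_def]] by simp_all
  have "2 * real (SQ A) - N ^ 2 + (1 - 1) * N + (1 / q) * N ^ 2 \<le> (Q - Q / q) * N"
    unfolding N_def
    by (rule SQ_le_by_kernel[OF odd even[unfolded d_def]])
      (use q \<open>Q > 0\<close> sign in \<open>simp_all flip: q_def d_def Q_def add: Q(1) field_simps\<close>)
  then have "real (SQ A) \<le> (N ^ 2 - (1 / q) * N ^ 2 + (Q - Q / q) * N) / 2"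
    by simp
  also have "\<dots> = N^2/2 + q^(d div 2) * N / 2 - N^2/(2*q) - q^((d-2) div 2) * N / 2"
    using q unfolding Q_def[symmetric] by (simp add: Q(2) field_simps)
  finally show ?thesis .
qed

lemma SQ_upper_bound_positive_sign_large_sets:
  fixes A :: "('a::{finite,field} ^ 'n) set"
  defines "q \<equiv> real CARD('a)" and "d \<equiv> CARD('n)" and "N \<equiv> real (card A)"
  assumes odd: "odd CARD('a)" and even: "even d" and sign: "qchar (-1::'a) ^ (d div 2) = 1"
  shows "real (SQ A) \<le> N^2/2 + q^(d div 2) * N / 2 - N^2 / q^(d div 2) - N^2/(2*q)
    + q^((d-2) div 2) * N / 2"
proof -
  define Q where "Q = q ^ (d div 2)"
  have q: "q > 0" and "Q > 0" unfolding Q_def q_def by simp_all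
  have Q: "q ^ d = Q ^ 2" "Q = q * q ^ ((d - 2) div 2)"
    unfolding Q_def d_def using power_even_div_2[OF even[unfolded d_def]] by simp_all
  have "2 * real (SQ A) - N ^ 2 + (1 - 1) * N + (2 / Q + 1 / q) * N ^ 2 \<le> (Q + Q / q) * N"
    unfolding N_def
    by (rule SQ_le_by_kernel[OF odd even[unfolded d_def]])
      (use q \<open>Q > 0\<close> sign in
        \<open>simp_all flip: q_def d_def Q_def add: Q(1) field_simps power2_eq_square\<close>)
  then have "real (SQ A) \<le> (N ^ 2 - (2 / Q + 1 / q) * N ^ 2 + (Q + Q / q) * N) / 2"
    by simp
  also have "\<dots> = N^2/2 + q^(d div 2) * N / 2 - N^2 / q^(d div 2) - N^2/(2*q) + q^((d-2) div 2) * N / 2"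
    using q \<open>Q > 0\<close> unfolding Q_def[symmetric] by (simp add: Q(2) field_simps)
  finally show ?thesis .
qed

lemma SQ_upper_bound_positive_sign_small_sets:
  fixes A :: "('a::{finite,field} ^ 'n) set"
  defines "q \<equiv> real CARD('a)" and "d \<equiv> CARD('n)" and "N \<equiv> real (card A)"
  assumes odd: "odd CARD('a)" and even: "even d" and sign: "qchar (-1::'a) ^ (d div 2) = 1"
  shows "real (SQ A) \<le> N^2/2 + q^(d div 2) * N / 2 - N^2 / (2 * q^(d div 2)) - N / 2"
proof -
  define Q where "Q = q ^ (d div 2)"
  have q: "q > 0" and "Q > 0" unfolding Q_def q_def by simp_all
  have Q: "q ^ d = Q ^ 2"
    unfolding Q_def d_def using power_even_div_2[OF even[unfolded d_def]] by simp_all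
  have "2 * real (SQ A) - N ^ 2 + (1 - 0) * N + (1 / Q) * N ^ 2 \<le> Q * N"
    unfolding N_def
    by (rule SQ_le_by_kernel[OF odd even[unfolded d_def]])
      (use q \<open>Q > 0\<close> sign in
        \<open>simp_all flip: q_def d_def Q_def add: Q field_simps power2_eq_square\<close>)
  then have "real (SQ A) \<le> (N ^ 2 - N - (1 / Q) * N ^ 2 + Q * N) / 2"
    by simp
  also have "\<dots> = N^2/2 + q^(d div 2) * N / 2 - N^2 / (2 * q^(d div 2)) - N / 2"
    using \<open>Q > 0\<close> unfolding Q_def[symmetric] by (simp add: field_simps)
  finally show ?thesis .
qed

theorem theorem1p5:
  fixes A :: "('a::{finite,field} ^ 'n) set"
  defines "q \<equiv> real CARD('a)" and "d \<equiv> CARD('n)" and "N \<equiv> real (card A)"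
  assumes qodd: "odd CARD('a)"
  shows
    "(d mod 4 = 2 \<and> CARD('a) mod 4 = 3 \<longrightarrow>
        real (SQ A) \<le> N^2/2 + q^(d div 2) * N / 2 - N^2/(2*q) - q^((d-2) div 2) * N / 2)
   \<and> (d mod 4 = 0 \<or> (d mod 4 = 2 \<and> CARD('a) mod 4 = 1) \<longrightarrow>
        (N \<ge> (q^(d div 2) + q) / (1 + 1 / q^((d-2) div 2)) \<longrightarrow>
           real (SQ A) \<le> N^2/2 + q^(d div 2) * N / 2 - N^2 / q^(d div 2) - N^2/(2*q)
                          + q^((d-2) div 2) * N / 2)
      \<and> (N \<le> (q^(d div 2) + q) / (1 + 1 / q^((d-2) div 2)) \<longrightarrow>
           real (SQ A) \<le> N^2/2 + q^(d div 2) * N / 2 - N^2 / (2 * q^(d div 2)) - N / 2))"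
proof (intro conjI impI)
  assume case_3_mod_4: "d mod 4 = 2 \<and> CARD('a) mod 4 = 3"
  then have "even d" by presburger
  with case_3_mod_4 have "qchar (-1::'a) ^ (d div 2) = -1"
    using qchar_minus_one_power_half[OF qodd] by simp
  with \<open>even d\<close> show "real (SQ A) \<le> N^2/2 + q^(d div 2) * N / 2 - N^2/(2*q) - q^((d-2) div 2) * N / 2"
    unfolding q_def d_def N_def by (rule SQ_upper_bound_negative_sign[OF qodd])
next
  assume case_plus: "d mod 4 = 0 \<or> (d mod 4 = 2 \<and> CARD('a) mod 4 = 1)"
  then have "even d" by presburger
  with case_plus have "qchar (-1::'a) ^ (d div 2) = 1"
    using qchar_minus_one_power_half[OF qodd] by auto
  note even = \<open>even d\<close>[unfolded d_def] and sign = this[unfolded d_def]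
  (* Both bounds hold for every A; the threshold on N only decides which one is smaller. *)
  show "real (SQ A) \<le> N^2/2 + q^(d div 2) * N / 2 - N^2 / q^(d div 2) - N^2/(2*q)
      + q^((d-2) div 2) * N / 2"
    unfolding q_def d_def N_def by (rule SQ_upper_bound_positive_sign_large_sets[OF qodd even sign])
  show "real (SQ A) \<le> N^2/2 + q^(d div 2) * N / 2 - N^2 / (2 * q^(d div 2)) - N / 2"
    unfolding q_def d_def N_def by (rule SQ_upper_bound_positive_sign_small_sets[OF qodd even sign])
qed

end
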